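(* A finite simple graph $G$ is a circular-arc graph if and only if $V(G)$ admits a linear ordering $\le$ with no four distinct vertices $w_1<w_2<w_3<w_4$ satisfying either ($w_1w_3\in E(G)$, $w_1w_2\notin E(G)$ and $w_3w_4\notin E(G)$) or ($w_2w_4\in E(G)$, $w_2w_3\notin E(G)$ and $w_1w_4\notin E(G)$).
   Context: A circular-arc graph is the intersection graph of a finite family of arcs of a circle. (In the paper this forbidden family is denoted $L(CA)$: the linearly ordered graphs on four vertices whose circular closure is represented by the circular pattern with circularly consecutive vertices $v_1,v_2,v_3,v_4$, required edge $v_2v_4$ and required non-edges $v_1v_4$, $v_2v_3$.) *)

theory Defs
  imports Complex_Main
begin

definition simple_graph :: "'a set \<Rightarrow> ('a \<Rightarrow> 'a \<Rightarrow> bool) \<Rightarrow> bool" where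
  "simple_graph V E \<longleftrightarrow> finite V \<and> (\<forall>u v. E u v \<longrightarrow> u \<in> V \<and> v \<in> V)
     \<and> (\<forall>u v. E u v \<longrightarrow> E v u) \<and> (\<forall>v. \<not> E v v)"

text \<open>A (closed) arc of the unit circle in the complex plane, from angle a to angle b
  counterclockwise; a \<le> b \<le> a + 2 pi (the whole circle and single points allowed).\<close>
definition is_arc :: "complex set \<Rightarrow> bool" where
  "is_arc A \<longleftrightarrow> (\<exists>a b::real. a \<le> b \<and> b \<le> a + 2 * pi \<and> A = {cis t | t. a \<le> t \<and> t \<le> b})"

definition circular_arc_graph :: "'a set \<Rightarrow> ('a \<Rightarrow> 'a \<Rightarrow> bool) \<Rightarrow> bool" where
  "circular_arc_graph V E \<longleftrightarrow> (\<exists>f :: 'a \<Rightarrow> complex set.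
     (\<forall>v\<in>V. is_arc (f v)) \<and>
     (\<forall>u\<in>V. \<forall>v\<in>V. u \<noteq> v \<longrightarrow> (E u v \<longleftrightarrow> f u \<inter> f v \<noteq> {})))"

definition forbidden_pattern :: "('a \<Rightarrow> 'a \<Rightarrow> bool) \<Rightarrow> 'a \<Rightarrow> 'a \<Rightarrow> 'a \<Rightarrow> 'a \<Rightarrow> bool" where
  "forbidden_pattern E w1 w2 w3 w4 \<longleftrightarrow>
     (E w1 w3 \<and> \<not> E w1 w2 \<and> \<not> E w3 w4) \<or> (E w2 w4 \<and> \<not> E w2 w3 \<and> \<not> E w1 w4)"

end

theory Submission
  imports Defs "HOL-Library.Product_Lexorder"
begin

text \<open>
  Fix a linear order of the vertices and place the start of the arc of each vertex at an
  angle in [0, 2 pi), increasingly along the order. Say that u reaches v if u is adjacent to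
  every other vertex on the cyclic interval from u to v. Reaching is closed under cyclic
  betweenness, so the arc of u can be chosen to contain exactly the starts of the vertices it
  reaches; and two arcs meet iff one contains the start of the other. The two forbidden
  patterns are precisely what makes adjacency equivalent to u reaching v or v reaching u.
  Conversely, order the arcs of a model by their starts: an arc containing the start of v
  contains the starts of all vertices cyclically between, and this excludes both patterns.
\<close>

lemma cis_eq_cisE:
  assumes "cis x = cis y"
  obtains n :: int where "x = y + of_int n * (2 * pi)"
proof -
  have "cis (x - y) = 1"
    using assms by (simp flip: cis_divide)
  then have "cos (x - y) = 1"
    by (simp add: complex_eq_iff)
  then obtain n :: int where "x - y = of_int n * 2 * pi"
    by (auto simp: cos_one_2pi_int)
  then show thesis
    by (intro that[of n]) (simp add: algebra_simps)
qed

lemma cis_add_multiple_2pi [simp]: "cis (x + of_int n * (2 * pi)) = cis x"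
proof -
  have "cis (of_int n * (2 * pi)) = 1"
    using cis_multiple_2pi[of "of_int n"] by (simp add: mult.commute)
  then show ?thesis
    by (simp flip: cis_mult)
qed

lemma cis_image_shift_2pi: "cis ` {a + of_int n * (2 * pi)..b + of_int n * (2 * pi)} = cis ` {a..b}"
proof -
  have "cis ` {a + of_int n * (2 * pi)..b + of_int n * (2 * pi)} =
      cis ` (\<lambda>t. t + of_int n * (2 * pi)) ` {a..b}"
    by simp
  then show ?thesis
    by (simp only: image_image cis_add_multiple_2pi)
qed

lemma arcs_meet_iff_start_in_arc:
  assumes "a1 \<le> b1" "a2 \<le> b2"
  shows "cis ` {a1..b1} \<inter> cis ` {a2..b2} \<noteq> {} \<longleftrightarrow>
    cis a2 \<in> cis ` {a1..b1} \<or> cis a1 \<in> cis ` {a2..b2}"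
proof
  assume "cis ` {a1..b1} \<inter> cis ` {a2..b2} \<noteq> {}"
  then obtain t1 t2 where t: "t1 \<in> {a1..b1}" "t2 \<in> {a2..b2}" "cis t1 = cis t2"
    by blast
  then obtain n :: int where n: "t1 = t2 + of_int n * (2 * pi)"
    by (elim cis_eq_cisE)
  define d where "d = of_int n * (2 * pi)"
  have arc2: "cis ` {a2 + d..b2 + d} = cis ` {a2..b2}" and start2: "cis (a2 + d) = cis a2"
    unfolding d_def by (simp_all only: cis_image_shift_2pi cis_add_multiple_2pi)
  have t1: "t1 \<in> {a1..b1} \<inter> {a2 + d..b2 + d}"
    using t n unfolding d_def by auto
  show "cis a2 \<in> cis ` {a1..b1} \<or> cis a1 \<in> cis ` {a2..b2}"
  proof (cases "a2 + d \<le> a1")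
    case True
    with t1 have "a1 \<in> {a2 + d..b2 + d}" by auto
    then show ?thesis using arc2 by blast
  next
    case False
    with t1 have "a2 + d \<in> {a1..b1}" by auto
    then show ?thesis using start2 by (metis imageI)
  qed
next
  assume "cis a2 \<in> cis ` {a1..b1} \<or> cis a1 \<in> cis ` {a2..b2}"
  moreover have "cis a1 \<in> cis ` {a1..b1}" "cis a2 \<in> cis ` {a2..b2}"
    using assms by auto
  ultimately show "cis ` {a1..b1} \<inter> cis ` {a2..b2} \<noteq> {}"
    by blast
qed

text \<open>For a, c in [0, 2 pi), angle_from a c is the representative of c in [a, a + 2 pi).\<close>

definition angle_from :: "real \<Rightarrow> real \<Rightarrow> real" where
  "angle_from a c = (if a \<le> c then c else c + 2 * pi)"

lemma cis_in_arc_iff: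
  assumes "0 \<le> a" "a < 2 * pi" "0 \<le> c" "c < 2 * pi" "b \<le> a + 2 * pi"
  shows "cis c \<in> cis ` {a..b} \<longleftrightarrow> angle_from a c \<le> b"
proof
  assume "cis c \<in> cis ` {a..b}"
  then obtain t where t: "t \<in> {a..b}" "cis t = cis c"
    by auto
  then obtain n :: int where n: "t = c + of_int n * (2 * pi)"
    by (elim cis_eq_cisE)
  have "-1 * (2 * pi) < of_int n * (2 * pi)" "of_int n * (2 * pi) < 2 * (2 * pi)"
    using assms t n by (auto simp only: atLeastAtMost_iff; linarith)+
  then have "-1 < real_of_int n" "real_of_int n < 2"
    by (simp_all only: mult_less_cancel_right_pos[of "2 * pi"] pi_gt_zero mult_pos_pos
        zero_less_numeral)
  then have "n = 0 \<or> n = 1"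
    by linarith
  then show "angle_from a c \<le> b"
    using t n unfolding angle_from_def by auto (use pi_gt_zero in linarith)
next
  assume "angle_from a c \<le> b"
  moreover have "a \<le> angle_from a c" "cis (angle_from a c) = cis c"
    using assms unfolding angle_from_def by (auto simp flip: cis_mult)
  ultimately show "cis c \<in> cis ` {a..b}"
    by (metis atLeastAtMost_iff imageI)
qed

lemma is_arc_iff: "is_arc A \<longleftrightarrow> (\<exists>a b. a \<le> b \<and> b \<le> a + 2 * pi \<and> A = cis ` {a..b})"
proof -
  have "{cis t | t. a \<le> t \<and> t \<le> b} = cis ` {a..b}" for a b
    by auto
  then show ?thesis
    unfolding is_arc_def by simp
qed

lemma arc_normal_form:
  assumes "is_arc A"
  obtains a b where "0 \<le> a" "a < 2 * pi" "a \<le> b" "b \<le> a + 2 * pi" "A = cis ` {a..b}"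
proof -
  obtain a0 b0 where ab0: "a0 \<le> b0" "b0 \<le> a0 + 2 * pi" "A = cis ` {a0..b0}"
    using assms unfolding is_arc_iff by blast
  define n where "n = - \<lfloor>a0 / (2 * pi)\<rfloor>"
  have "0 \<le> a0 + of_int n * (2 * pi)" "a0 + of_int n * (2 * pi) < 2 * pi"
    using floor_divide_lower[of "2 * pi" a0] floor_divide_upper[of "2 * pi" a0]
    unfolding n_def by (auto simp: algebra_simps)
  moreover have "A = cis ` {a0 + of_int n * (2 * pi)..b0 + of_int n * (2 * pi)}"
    using ab0 by (simp only: cis_image_shift_2pi)
  ultimately show thesis
    using ab0 by (intro that) auto
qed

lemma linear_order_onD:
  assumes "linear_order_on V R"
  shows "refl_on V R" "trans R" "antisym R" "total_on V R" "R \<subseteq> V \<times> V"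
  using assms unfolding linear_order_on_def partial_order_on_def preorder_on_def by auto

lemma linear_order_on_key:
  fixes key :: "'a \<Rightarrow> 'b::linorder"
  assumes "inj_on key V"
  shows "linear_order_on V {(u, v). u \<in> V \<and> v \<in> V \<and> key u \<le> key v}"
  using assms unfolding linear_order_on_def partial_order_on_def preorder_on_def refl_on_def
    trans_def antisym_def total_on_def inj_on_def by fastforce

definition cyclic_between :: "'a rel \<Rightarrow> 'a \<Rightarrow> 'a \<Rightarrow> 'a \<Rightarrow> bool" where
  "cyclic_between R u w v \<longleftrightarrow>
    (if (u, v) \<in> R then (u, w) \<in> R \<and> (w, v) \<in> R else (u, w) \<in> R \<or> (w, v) \<in> R)"

lemma cyclic_between_trans:
  assumes "trans R" "cyclic_between R u w v" "cyclic_between R u x w"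
  shows "cyclic_between R u x v"
  using assms unfolding cyclic_between_def trans_def by metis

definition angle_embedding :: "'a set \<Rightarrow> 'a rel \<Rightarrow> ('a \<Rightarrow> real) \<Rightarrow> bool" where
  "angle_embedding V R pos \<longleftrightarrow>
    (\<forall>v\<in>V. 0 \<le> pos v \<and> pos v < 2 * pi) \<and> (\<forall>u\<in>V. \<forall>v\<in>V. (u, v) \<in> R \<longleftrightarrow> pos u \<le> pos v)"

lemma exists_angle_embedding:
  assumes "finite V" "linear_order_on V R"
  obtains pos where "angle_embedding V R pos"
proof -
  define rank where "rank v = card {w \<in> V. (w, v) \<in> R \<and> w \<noteq> v}" for v
  note order = linear_order_onD[OF assms(2)]
  have rank_less: "rank u < rank v" if "(u, v) \<in> R" "u \<noteq> v" for u v
  proof -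
    have "{w \<in> V. (w, u) \<in> R \<and> w \<noteq> u} \<subseteq> {w \<in> V. (w, v) \<in> R \<and> w \<noteq> v}"
      using that transD[OF order(2)] antisymD[OF order(3)] by blast
    moreover have "u \<in> {w \<in> V. (w, v) \<in> R \<and> w \<noteq> v}"
      using that order(5) by blast
    ultimately have "{w \<in> V. (w, u) \<in> R \<and> w \<noteq> u} \<subset> {w \<in> V. (w, v) \<in> R \<and> w \<noteq> v}"
      by blast
    then show ?thesis
      unfolding rank_def using assms(1) by (auto intro: psubset_card_mono)
  qed
  have rank_bound: "rank v < card V" if "v \<in> V" for v
    unfolding rank_def using that assms(1) by (auto intro: psubset_card_mono)
  have R_iff_rank: "(u, v) \<in> R \<longleftrightarrow> rank u \<le> rank v" if "u \<in> V" "v \<in> V" for u v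
    using that order(1,4) rank_less[of u v] rank_less[of v u] unfolding total_on_def refl_on_def
    by (metis linorder_not_le less_imp_le order_refl)
  define pos where "pos v = 2 * pi * rank v / card V" for v
  show thesis
  proof (rule that, unfold angle_embedding_def, intro conjI ballI)
    fix v assume "v \<in> V"
    then have "real (rank v) < real (card V)"
      using rank_bound by simp
    then show "0 \<le> pos v" "pos v < 2 * pi"
      unfolding pos_def by (auto simp: field_simps)
  next
    fix u v assume "u \<in> V" "v \<in> V"
    then have "card V > 0"
      using rank_bound by fastforce
    then show "(u, v) \<in> R \<longleftrightarrow> pos u \<le> pos v"
      using R_iff_rank[OF \<open>u \<in> V\<close> \<open>v \<in> V\<close>] unfolding pos_def
      by (simp add: divide_le_cancel)
  qed
qed

lemma angle_from_le_iff_cyclic_between: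
  assumes "angle_embedding V R pos" "u \<in> V" "v \<in> V" "w \<in> V"
  shows "angle_from (pos u) (pos w) \<le> angle_from (pos u) (pos v) \<longleftrightarrow> cyclic_between R u w v"
proof -
  have "0 \<le> pos v" "pos v < 2 * pi" "0 \<le> pos w" "pos w < 2 * pi"
    and "(u, v) \<in> R \<longleftrightarrow> pos u \<le> pos v" "(u, w) \<in> R \<longleftrightarrow> pos u \<le> pos w"
      "(w, v) \<in> R \<longleftrightarrow> pos w \<le> pos v"
    using assms unfolding angle_embedding_def by auto
  then show ?thesis
    unfolding angle_from_def cyclic_between_def by auto
qed

lemma arc_through_cyclic_interval:
  assumes "finite V" "angle_embedding V R pos" "u \<in> C" "C \<subseteq> V"
    and closed: "\<And>v w. v \<in> C \<Longrightarrow> w \<in> V \<Longrightarrow> cyclic_between R u w v \<Longrightarrow> w \<in> C"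
  obtains b where "pos u \<le> b" "b \<le> pos u + 2 * pi"
    "\<And>w. w \<in> V \<Longrightarrow> cis (pos w) \<in> cis ` {pos u..b} \<longleftrightarrow> w \<in> C"
proof -
  define b where "b = Max ((\<lambda>v. angle_from (pos u) (pos v)) ` C)"
  have fin: "finite ((\<lambda>v. angle_from (pos u) (pos v)) ` C)"
    using assms(1,4) finite_subset by blast
  have cyclic_refl: "cyclic_between R u w w" if "w \<in> V" for w
    using assms(2) that unfolding angle_embedding_def cyclic_between_def by auto
  have le_b: "angle_from (pos u) (pos w) \<le> b \<longleftrightarrow> w \<in> C" if "w \<in> V" for w
  proof -
    have "angle_from (pos u) (pos w) \<le> b \<longleftrightarrow>
        (\<exists>v\<in>C. angle_from (pos u) (pos w) \<le> angle_from (pos u) (pos v))"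
      unfolding b_def using fin assms(3) by (subst Max_ge_iff) auto
    also have "\<dots> \<longleftrightarrow> (\<exists>v\<in>C. cyclic_between R u w v)"
      using angle_from_le_iff_cyclic_between[OF assms(2)] assms(3,4) that by blast
    also have "\<dots> \<longleftrightarrow> w \<in> C"
      using closed cyclic_refl that by blast
    finally show ?thesis .
  qed
  have u: "u \<in> V" "0 \<le> pos u" "pos u < 2 * pi"
    using assms(2-4) unfolding angle_embedding_def by auto
  have "pos u \<le> b"
    using le_b[of u] u assms(3) by (simp add: angle_from_def)
  moreover have "b \<le> pos u + 2 * pi"
  proof -
    have "b \<in> (\<lambda>v. angle_from (pos u) (pos v)) ` C"
      unfolding b_def using fin assms(3) by (intro Max_in) auto
    then obtain v where "v \<in> V" "b = angle_from (pos u) (pos v)"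
      using assms(4) by blast
    moreover have "pos v < 2 * pi"
      using assms(2) \<open>v \<in> V\<close> unfolding angle_embedding_def by blast
    ultimately show ?thesis
      using u unfolding angle_from_def by auto
  qed
  moreover have "cis (pos w) \<in> cis ` {pos u..b} \<longleftrightarrow> w \<in> C" if "w \<in> V" for w
  proof -
    have "0 \<le> pos w" "pos w < 2 * pi"
      using assms(2) that unfolding angle_embedding_def by auto
    then show ?thesis
      using cis_in_arc_iff[OF u(2,3) _ _ calculation(2)] le_b[OF that] by blast
  qed
  ultimately show thesis
    by (rule that)
qed

definition pattern_free :: "'a set \<Rightarrow> ('a \<Rightarrow> 'a \<Rightarrow> bool) \<Rightarrow> 'a rel \<Rightarrow> bool" where
  "pattern_free V E R \<longleftrightarrow>
    \<not> (\<exists>w1\<in>V. \<exists>w2\<in>V. \<exists>w3\<in>V. \<exists>w4\<in>V.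
          distinct [w1, w2, w3, w4] \<and>
          (w1, w2) \<in> R \<and> (w2, w3) \<in> R \<and> (w3, w4) \<in> R \<and>
          forbidden_pattern E w1 w2 w3 w4)"

lemma pattern_freeD:
  assumes "pattern_free V E R" "w1 \<in> V" "w2 \<in> V" "w3 \<in> V" "w4 \<in> V"
    and "trans R" "antisym R" "(w1, w2) \<in> R" "(w2, w3) \<in> R" "(w3, w4) \<in> R"
    and "w1 \<noteq> w2" "w2 \<noteq> w3" "w3 \<noteq> w4"
  shows "E w1 w3 \<Longrightarrow> \<not> E w1 w2 \<Longrightarrow> E w3 w4"
    and "E w2 w4 \<Longrightarrow> \<not> E w2 w3 \<Longrightarrow> E w1 w4"
proof -
  have "(w1, w3) \<in> R" "(w2, w4) \<in> R" "(w1, w4) \<in> R"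
    using assms(6,8-10) by (meson transD)+
  then have "distinct [w1, w2, w3, w4]"
    using assms(7-13) by (auto dest: antisymD)
  with assms(1-5,8-10) have "\<not> forbidden_pattern E w1 w2 w3 w4"
    unfolding pattern_free_def by blast
  then show "E w1 w3 \<Longrightarrow> \<not> E w1 w2 \<Longrightarrow> E w3 w4" "E w2 w4 \<Longrightarrow> \<not> E w2 w3 \<Longrightarrow> E w1 w4"
    unfolding forbidden_pattern_def by blast+
qed

definition reaches :: "'a set \<Rightarrow> ('a \<Rightarrow> 'a \<Rightarrow> bool) \<Rightarrow> 'a rel \<Rightarrow> 'a \<Rightarrow> 'a \<Rightarrow> bool" where
  "reaches V E R u v \<longleftrightarrow> (\<forall>w\<in>V. cyclic_between R u w v \<and> w \<noteq> u \<longrightarrow> E u w)"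

lemma reaches_refl:
  assumes "linear_order_on V R" "u \<in> V"
  shows "reaches V E R u u"
proof -
  have "(u, u) \<in> R" "antisym R"
    using refl_onD[OF linear_order_onD(1)[OF assms(1)] assms(2)] linear_order_onD(3)[OF assms(1)] .
  show ?thesis
    unfolding reaches_def
  proof (intro ballI impI)
    fix w assume w: "w \<in> V" "cyclic_between R u w u \<and> w \<noteq> u"
    then have "(u, w) \<in> R" "(w, u) \<in> R"
      using \<open>(u, u) \<in> R\<close> unfolding cyclic_between_def by auto
    then show "E u w"
      using \<open>antisym R\<close> w(2) by (metis antisymD)
  qed
qed

lemma reaches_imp_adjacent:
  assumes "linear_order_on V R" "v \<in> V" "u \<noteq> v" "reaches V E R u v"
  shows "E u v"
proof -
  have "(v, v) \<in> R"
    using refl_onD[OF linear_order_onD(1)[OF assms(1)] assms(2)] .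
  then have "cyclic_between R u v v"
    unfolding cyclic_between_def by simp
  then show ?thesis
    using assms(2-4) unfolding reaches_def by blast
qed

lemma reaches_cyclic_between:
  assumes "trans R" "reaches V E R u v" "cyclic_between R u w v"
  shows "reaches V E R u w"
  unfolding reaches_def
proof (intro ballI impI)
  fix x assume "x \<in> V" "cyclic_between R u x w \<and> x \<noteq> u"
  then show "E u x"
    using assms(2) cyclic_between_trans[OF assms(1,3)] unfolding reaches_def by blast
qed

lemma pattern_free_reaches_back:
  assumes "symp E" "linear_order_on V R" "pattern_free V E R"
    and "u \<in> V" "v \<in> V" "(u, v) \<in> R" "u \<noteq> v" "E u v" "\<not> reaches V E R u v"
  shows "reaches V E R v u"
proof -
  note R = linear_order_onD(2,3)[OF assms(2)]
  obtain w where w: "w \<in> V" "(u, w) \<in> R" "(w, v) \<in> R" "w \<noteq> u" "\<not> E u w"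
    using assms(6,9) unfolding reaches_def cyclic_between_def by auto
  have "w \<noteq> v"
    using assms(8) w(5) by blast
  have "(v, u) \<notin> R"
    using antisymD[OF R(2) assms(6)] assms(7) by blast
  have "E v x" if x: "x \<in> V" "cyclic_between R v x u" "x \<noteq> v" for x
  proof -
    have "(v, x) \<in> R \<or> (x, u) \<in> R"
      using x(2) \<open>(v, u) \<notin> R\<close> unfolding cyclic_between_def by auto
    then show "E v x"
    proof
      assume "(v, x) \<in> R"
      then show "E v x"
        using pattern_freeD(1)[OF assms(3,4) w(1) assms(5) x(1) R] w assms x \<open>w \<noteq> v\<close> by blast
    next
      assume "(x, u) \<in> R"
      moreover have "E x v" if "x \<noteq> u"
        using pattern_freeD(2)[OF assms(3) x(1) assms(4) w(1) assms(5) R] w assms \<open>w \<noteq> v\<close> that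
          \<open>(x, u) \<in> R\<close> by blast
      ultimately show "E v x"
        using sympD[OF assms(1)] assms(8) by blast
    qed
  qed
  then show ?thesis
    unfolding reaches_def by blast
qed

lemma pattern_free_adjacent_iff_reaches:
  assumes "symp E" "linear_order_on V R" "pattern_free V E R"
    and "u \<in> V" "v \<in> V" "u \<noteq> v"
  shows "E u v \<longleftrightarrow> reaches V E R u v \<or> reaches V E R v u"
proof -
  have sym: "E x y \<longleftrightarrow> E y x" for x y
    using sympD[OF assms(1)] by blast
  have "(u, v) \<in> R \<or> (v, u) \<in> R"
    using linear_order_onD(4)[OF assms(2)] assms(4-6) unfolding total_on_def by blast
  then show ?thesis
    using pattern_free_reaches_back[OF assms(1-3)] reaches_imp_adjacent[OF assms(2)] assms(4-6) sym
    by metis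
qed

lemma pattern_free_if_cyclically_closed:
  assumes R: "linear_order_on V R"
    and adj: "\<And>u v. u \<in> V \<Longrightarrow> v \<in> V \<Longrightarrow> u \<noteq> v \<Longrightarrow> E u v \<longleftrightarrow> C u v \<or> C v u"
    and closed: "\<And>u v w. u \<in> V \<Longrightarrow> v \<in> V \<Longrightarrow> w \<in> V \<Longrightarrow> C u v \<Longrightarrow>
      cyclic_between R u w v \<Longrightarrow> C u w"
  shows "pattern_free V E R"
  unfolding pattern_free_def
proof clarify
  fix w1 w2 w3 w4
  assume w: "w1 \<in> V" "w2 \<in> V" "w3 \<in> V" "w4 \<in> V" "distinct [w1, w2, w3, w4]"
    "(w1, w2) \<in> R" "(w2, w3) \<in> R" "(w3, w4) \<in> R" "forbidden_pattern E w1 w2 w3 w4"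
  have "trans R" "antisym R"
    using linear_order_onD(2,3)[OF R] .
  then have "(w1, w3) \<in> R" "(w2, w4) \<in> R" "(w3, w1) \<notin> R" "(w4, w2) \<notin> R"
    using w(5-8) by (auto dest: transD antisymD)
  then have "cyclic_between R w1 w2 w3" "cyclic_between R w3 w4 w1"
    "cyclic_between R w2 w3 w4" "cyclic_between R w4 w1 w2"
    using w(6-8) unfolding cyclic_between_def by auto
  then show False
    using w(9) closed adj w(1-5) unfolding forbidden_pattern_def
    by (metis distinct_length_2_or_more)
qed

lemma pattern_free_imp_circular_arc_graph:
  assumes G: "simple_graph V E" and R: "linear_order_on V R" and free: "pattern_free V E R"
  shows "circular_arc_graph V E"
proof -
  have "finite V" "symp E"
    using G unfolding simple_graph_def symp_def by blast+
  obtain pos where pos: "angle_embedding V R pos"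
    using exists_angle_embedding[OF \<open>finite V\<close> R] by blast
  have "\<exists>b. pos u \<le> b \<and> b \<le> pos u + 2 * pi \<and>
      (\<forall>w\<in>V. cis (pos w) \<in> cis ` {pos u..b} \<longleftrightarrow> reaches V E R u w)" if "u \<in> V" for u
  proof -
    let ?C = "{w \<in> V. reaches V E R u w}"
    have "u \<in> ?C"
      using reaches_refl[OF R that] that by blast
    moreover have "w \<in> ?C" if "v \<in> ?C" "w \<in> V" "cyclic_between R u w v" for v w
      using reaches_cyclic_between[OF linear_order_onD(2)[OF R]] that by blast
    ultimately obtain b where "pos u \<le> b" "b \<le> pos u + 2 * pi"
      "\<And>w. w \<in> V \<Longrightarrow> cis (pos w) \<in> cis ` {pos u..b} \<longleftrightarrow> w \<in> ?C"
      using arc_through_cyclic_interval[OF \<open>finite V\<close> pos, of u ?C] by blast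
    then show ?thesis
      by blast
  qed
  then obtain ends where ends: "\<And>u. u \<in> V \<Longrightarrow> pos u \<le> ends u \<and> ends u \<le> pos u + 2 * pi \<and>
      (\<forall>w\<in>V. cis (pos w) \<in> cis ` {pos u..ends u} \<longleftrightarrow> reaches V E R u w)"
    by metis
  show ?thesis
    unfolding circular_arc_graph_def
  proof (intro exI[of _ "\<lambda>u. cis ` {pos u..ends u}"] conjI ballI impI)
    fix u assume "u \<in> V"
    then show "is_arc (cis ` {pos u..ends u})"
      unfolding is_arc_iff using ends by blast
  next
    fix u v assume uv: "u \<in> V" "v \<in> V" "u \<noteq> v"
    have "E u v \<longleftrightarrow> reaches V E R u v \<or> reaches V E R v u"
      by (rule pattern_free_adjacent_iff_reaches[OF \<open>symp E\<close> R free uv])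
    also have "\<dots> \<longleftrightarrow> cis (pos v) \<in> cis ` {pos u..ends u} \<or> cis (pos u) \<in> cis ` {pos v..ends v}"
      using ends uv by blast
    also have "\<dots> \<longleftrightarrow> cis ` {pos u..ends u} \<inter> cis ` {pos v..ends v} \<noteq> {}"
      using arcs_meet_iff_start_in_arc ends[OF uv(1)] ends[OF uv(2)] by simp
    finally show "E u v \<longleftrightarrow> cis ` {pos u..ends u} \<inter> cis ` {pos v..ends v} \<noteq> {}" .
  qed
qed

lemma circular_arc_graph_imp_pattern_free:
  assumes "finite V" "circular_arc_graph V E"
  obtains R where "linear_order_on V R" "pattern_free V E R"
proof -
  obtain f where arcs: "\<And>v. v \<in> V \<Longrightarrow> is_arc (f v)"
    and meet: "\<And>u v. u \<in> V \<Longrightarrow> v \<in> V \<Longrightarrow> u \<noteq> v \<Longrightarrow> E u v \<longleftrightarrow> f u \<inter> f v \<noteq> {}"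
    using assms(2) unfolding circular_arc_graph_def by blast
  have "\<forall>v\<in>V. \<exists>a b. 0 \<le> a \<and> a < 2 * pi \<and> a \<le> b \<and> b \<le> a + 2 * pi \<and> f v = cis ` {a..b}"
    using arc_normal_form arcs by metis
  then obtain a b where ab: "\<And>v. v \<in> V \<Longrightarrow>
      0 \<le> a v \<and> a v < 2 * pi \<and> a v \<le> b v \<and> b v \<le> a v + 2 * pi \<and> f v = cis ` {a v..b v}"
    by metis
  have arc_adj: "E u v \<longleftrightarrow> angle_from (a u) (a v) \<le> b u \<or> angle_from (a v) (a u) \<le> b v"
    if "u \<in> V" "v \<in> V" "u \<noteq> v" for u v
    using meet[OF that] arcs_meet_iff_start_in_arc cis_in_arc_iff ab[OF that(1)] ab[OF that(2)]
    by simp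
  obtain g :: "'a \<Rightarrow> nat" where g: "inj_on g V"
    using finite_imp_inj_to_nat_seg[OF assms(1)] by blast
  define R where "R = {(u, v). u \<in> V \<and> v \<in> V \<and> (a u, g u) \<le> (a v, g v)}"
  have R: "linear_order_on V R"
    unfolding R_def using g by (intro linear_order_on_key) (auto simp: inj_on_def)
  have a_mono: "a u \<le> a v" if "(u, v) \<in> R" for u v
    using that unfolding R_def by (auto simp: less_eq_prod_def)
  \<comment> \<open>Starts are measured from a u along R rather than with angle_from, so that C stays
    closed under cyclic betweenness also when several arcs share their start.\<close>
  define C where "C u v \<longleftrightarrow> (if (u, v) \<in> R then a v else a v + 2 * pi) \<le> b u" for u v
  have "E u v \<longleftrightarrow> C u v \<or> C v u" if "u \<in> V" "v \<in> V" "u \<noteq> v" for u v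
  proof -
    have "(u, v) \<in> R \<and> (v, u) \<notin> R \<or> (v, u) \<in> R \<and> (u, v) \<notin> R"
      using R that linear_order_onD(3,4) unfolding antisym_def total_on_def by metis
    then show ?thesis
      using arc_adj[OF that] arc_adj[OF that(2,1)] ab[OF that(1)] ab[OF that(2)] a_mono
      unfolding C_def angle_from_def by auto
  qed
  moreover have "C u w" if "u \<in> V" "v \<in> V" "w \<in> V" "C u v" "cyclic_between R u w v" for u v w
    using that ab[OF that(2)] ab[OF that(3)] a_mono[of w v]
    unfolding C_def cyclic_between_def by (auto split: if_splits)
  ultimately have "pattern_free V E R"
    using pattern_free_if_cyclically_closed[OF R] by blast
  with R show thesis
    by (rule that)
qed

theorem proposition4:
  fixes V :: "'a set" and E :: "'a \<Rightarrow> 'a \<Rightarrow> bool"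
  assumes "simple_graph V E"
  shows "circular_arc_graph V E \<longleftrightarrow>
    (\<exists>R. linear_order_on V R \<and>
      \<not> (\<exists>w1\<in>V. \<exists>w2\<in>V. \<exists>w3\<in>V. \<exists>w4\<in>V.
            distinct [w1, w2, w3, w4] \<and>
            (w1, w2) \<in> R \<and> (w2, w3) \<in> R \<and> (w3, w4) \<in> R \<and>
            forbidden_pattern E w1 w2 w3 w4))"
proof -
  have "finite V"
    using assms unfolding simple_graph_def by blast
  then show ?thesis
    unfolding pattern_free_def[symmetric]
    using circular_arc_graph_imp_pattern_free pattern_free_imp_circular_arc_graph[OF assms] by metis
qed

end
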